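(* Let $X$ be a topological space in which every open set is a union of countably many clopen sets. The following are equivalent: (1) for every Borel function $\Psi:X\to\mathbb{N}^{\mathbb{N}}$, $\Psi[X]$ is a bounded subset of $\mathbb{N}^{\mathbb{N}}$; (2) for every continuous function $\Psi:X\to\overline{\mathbb{N}}^{\mathbb{N}}$, $\Psi[X]$ is a bounded subset of $\overline{\mathbb{N}}^{\mathbb{N}}$.
   Context: $\overline{\mathbb{N}}=\mathbb{N}\cup\{\infty\}$ is the one-point compactification of $\mathbb{N}$, and $\overline{\mathbb{N}}^{\mathbb{N}}$ has the product topology. A set $Y\subseteq\overline{\mathbb{N}}^{\mathbb{N}}$ is bounded if there is $g\in\mathbb{N}^{\mathbb{N}}$ such that for each $f\in Y$ and all but finitely many $n$, $f(n)<\infty$ implies $f(n)\le g(n)$. (For $Y\subseteq\mathbb{N}^{\mathbb{N}}$ this is the usual notion: each $f\in Y$ satisfies $f(n)\le g(n)$ for all but finitely many $n$.) *)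

theory Defs
  imports "HOL-Analysis.Analysis"
begin

definition baire_bounded :: "(nat \<Rightarrow> nat) set \<Rightarrow> bool" where
  "baire_bounded Y \<longleftrightarrow> (\<exists>g::nat \<Rightarrow> nat. \<forall>f\<in>Y. \<forall>\<^sub>F n in sequentially. f n \<le> g n)"

text \<open>Boundedness in (N \<union> {\<infinity>})^N, where enat carries its order topology,
  i.e. the one-point compactification of the discrete N.\<close>
definition enat_seq_bounded :: "(nat \<Rightarrow> enat) set \<Rightarrow> bool" where
  "enat_seq_bounded Y \<longleftrightarrow>
     (\<exists>g::nat \<Rightarrow> nat. \<forall>f\<in>Y. \<forall>\<^sub>F n in sequentially. f n < \<infinity> \<longrightarrow> f n \<le> enat (g n))"

definition open_countable_clopen_union :: "'a::topological_space itself \<Rightarrow> bool" where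
  "open_countable_clopen_union _ \<longleftrightarrow>
     (\<forall>U::'a set. open U \<longrightarrow>
        (\<exists>\<C>. countable \<C> \<and> (\<forall>C\<in>\<C>. open C \<and> closed C) \<and> U = \<Union>\<C>))"

end

theory Submission
  imports Defs
begin

(* (1) \<Longrightarrow> (2): a continuous map into (N \<union> {\<infinity>})^N becomes a Borel map into N^N after sending
   \<infinity> to an arbitrary natural number, and boundedness only concerns the finite values.

   (2) \<Longrightarrow> (1): call a double sequence of sets A n k "witness bounded" if one g works for all
   points x: for almost all n, if x lies in some A n k then already in one with k \<le> g n.
   If A consists of clopen sets, "the first k with x \<in> A n k" is a continuous map into
   (N \<union> {\<infinity>})^N, so (2) makes A witness bounded.  From this we get, in turn:
   every G_delta set is F_sigma; every Borel set is F_sigma; every double sequence of closed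
   sets is witness bounded.  Finally, for a Borel map \<Psi> we cover each level set
   {x. \<Psi> x n = j} by countably many closed sets, index them so that the index dominates j,
   and the witness bound for this closed family bounds \<Psi>. *)

definition continuous_images_bounded :: "'a::topological_space itself \<Rightarrow> bool" where
  "continuous_images_bounded _ \<longleftrightarrow>
     (\<forall>\<Psi> :: 'a \<Rightarrow> (nat \<Rightarrow> enat). continuous_on UNIV \<Psi> \<longrightarrow> enat_seq_bounded (range \<Psi>))"

definition witness_bounded :: "(nat \<Rightarrow> nat \<Rightarrow> 'a set) \<Rightarrow> bool" where
  "witness_bounded A \<longleftrightarrow>
     (\<exists>g::nat \<Rightarrow> nat. \<forall>x. \<forall>\<^sub>F n in sequentially. x \<in> (\<Union>k. A n k) \<longrightarrow> (\<exists>k\<le>g n. x \<in> A n k))"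

lemma open_clopen_sequence:
  fixes U :: "'a::topological_space set"
  assumes "open_countable_clopen_union TYPE('a)" and "open U"
  obtains C :: "nat \<Rightarrow> 'a set" where "\<And>k. open (C k) \<and> closed (C k)" and "U = (\<Union>k. C k)"
proof -
  obtain \<C> where \<C>: "countable \<C>" "\<forall>C\<in>\<C>. open C \<and> closed C" "U = \<Union>\<C>"
    using assms unfolding open_countable_clopen_union_def by blast
  show ?thesis
  proof (cases "\<C> = {}")
    case True
    then show ?thesis using that[of "\<lambda>_. {}"] \<C> by auto
  next
    case False
    then show ?thesis using that[of "from_nat_into \<C>"] \<C> by (auto simp: from_nat_into)
  qed
qed

lemma fsigma_iff_countable_union_of: "fsigma S \<longleftrightarrow> (countable union_of closed) S"
  by (simp add: countable_union_of_explicit fsigma.simps) metis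

subsection \<open>Clopen families\<close>

definition first_index :: "(nat \<Rightarrow> 'a set) \<Rightarrow> 'a \<Rightarrow> enat" where
  "first_index C x = (if \<exists>k. x \<in> C k then enat (LEAST k. x \<in> C k) else \<infinity>)"

lemma first_index_less_iff: "first_index C x < enat m \<longleftrightarrow> (\<exists>k<m. x \<in> C k)"
proof (cases "\<exists>k. x \<in> C k")
  case True
  define l where "l = (LEAST k. x \<in> C k)"
  have "x \<in> C l" unfolding l_def using True by (rule LeastI_ex)
  moreover have "\<And>k. x \<in> C k \<Longrightarrow> l \<le> k" unfolding l_def by (rule Least_le)
  moreover have "first_index C x = enat l" using True by (simp add: first_index_def l_def)
  ultimately show ?thesis by (auto intro: le_less_trans)
qed (simp add: first_index_def)

lemma first_index_greater_iff: "enat m < first_index C x \<longleftrightarrow> \<not> (\<exists>k\<le>m. x \<in> C k)"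
proof -
  have "enat m < first_index C x \<longleftrightarrow> \<not> first_index C x < enat (Suc m)"
    by (metis Suc_ile_eq not_less)
  then show ?thesis by (simp add: first_index_less_iff less_Suc_eq_le)
qed

lemma first_index_infinite_iff: "first_index C x = \<infinity> \<longleftrightarrow> (\<forall>k. x \<notin> C k)"
  by (simp add: first_index_def)

text \<open>For clopen C the sub- and superlevel sets of first_index are finite unions of the C k
  or their complements, hence open: first_index is continuous into N \<union> {\<infinity>}.\<close>
lemma continuous_on_first_index:
  assumes clopen: "\<And>k. open (C k) \<and> closed (C k)"
  shows "continuous_on UNIV (first_index C)"
proof (rule continuous_on_generate_topology[OF open_generated_order], safe)
  fix b :: enat
  have "open (first_index C -` {..<b})"
  proof (cases b)
    case (enat m)
    then have "first_index C -` {..<b} = (\<Union>k\<in>{..<m}. C k)"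
      by (auto simp: first_index_less_iff)
    then show ?thesis using clopen by auto
  next
    case infinity
    then have "first_index C -` {..<b} = (\<Union>k. C k)"
      by (auto simp: first_index_infinite_iff)
    then show ?thesis using clopen by auto
  qed
  then show "\<exists>A. open A \<and> A \<inter> UNIV = first_index C -` {..<b} \<inter> UNIV"
    by auto
  have "open (first_index C -` {b<..})"
  proof (cases b)
    case (enat m)
    then have "first_index C -` {b<..} = - (\<Union>k\<in>{..m}. C k)"
      by (auto simp: first_index_greater_iff)
    moreover have "closed (\<Union>k\<in>{..m}. C k)"
      using clopen by (intro closed_UN) auto
    ultimately show ?thesis by (metis open_Compl)
  next
    case infinity
    then have "first_index C -` {b<..} = {}" by (simp add: vimage_def)
    then show ?thesis by (metis open_empty)
  qed
  then show "\<exists>A. open A \<and> A \<inter> UNIV = first_index C -` {b<..} \<inter> UNIV"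
    by auto
qed

text \<open>Property (2) applied to x \<mapsto> (first_index (C n) x)_n.\<close>
lemma clopen_family_witness_bounded:
  fixes C :: "nat \<Rightarrow> nat \<Rightarrow> 'a::topological_space set"
  assumes bounded: "continuous_images_bounded TYPE('a)"
    and clopen: "\<And>n k. open (C n k) \<and> closed (C n k)"
  shows "witness_bounded C"
proof -
  define \<Psi> where "\<Psi> x n = first_index (C n) x" for x n
  have "continuous_on UNIV \<Psi>"
    unfolding \<Psi>_def by (intro continuous_on_coordinatewise_then_product continuous_on_first_index clopen)
  then obtain g where g: "\<And>x. \<forall>\<^sub>F n in sequentially. \<Psi> x n < \<infinity> \<longrightarrow> \<Psi> x n \<le> enat (g n)"
    using bounded unfolding continuous_images_bounded_def enat_seq_bounded_def by blast
  have "\<forall>\<^sub>F n in sequentially. x \<in> (\<Union>k. C n k) \<longrightarrow> (\<exists>k\<le>g n. x \<in> C n k)" for x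
    using g[of x]
  proof (rule eventually_mono, intro impI)
    fix n assume "\<Psi> x n < \<infinity> \<longrightarrow> \<Psi> x n \<le> enat (g n)" and "x \<in> (\<Union>k. C n k)"
    then have "\<Psi> x n < enat (Suc (g n))"
      by (auto simp: \<Psi>_def first_index_infinite_iff intro: le_less_trans)
    then show "\<exists>k\<le>g n. x \<in> C n k"
      by (auto simp: \<Psi>_def first_index_less_iff less_Suc_eq_le)
  qed
  then show ?thesis unfolding witness_bounded_def by blast
qed

subsection \<open>Consequences for Borel sets\<close>

text \<open>A witness bounded double sequence of closed sets has an F_sigma intersection of unions
  \<Inter>n. \<Union>k. C n k: with g the bound, it is the union over N and m of the closed sets of
  points having a witness k \<le> m for all n < N and a witness k \<le> g n for all n \<ge> N.\<close>
lemma witness_bounded_Inter_Union_fsigma: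
  fixes C :: "nat \<Rightarrow> nat \<Rightarrow> 'a::topological_space set"
  assumes "witness_bounded C" and closed: "\<And>n k. closed (C n k)"
  shows "fsigma (\<Inter>n. \<Union>k. C n k)"
proof -
  obtain g where g: "\<And>x. \<forall>\<^sub>F n in sequentially. x \<in> (\<Union>k. C n k) \<longrightarrow> (\<exists>k\<le>g n. x \<in> C n k)"
    using \<open>witness_bounded C\<close> unfolding witness_bounded_def by blast
  define F where "F N m = (\<Inter>n. \<Union>k\<in>{..if n < N then m else g n}. C n k)" for N m
  have closed_F: "closed (F N m)" for N m
    unfolding F_def using closed by (intro closed_INT closed_UN) auto
  have "(\<Inter>n. \<Union>k. C n k) = (\<Union>N m. F N m)"
  proof (rule subset_antisym)
    show "(\<Inter>n. \<Union>k. C n k) \<subseteq> (\<Union>N m. F N m)"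
    proof (rule subsetI)
      fix x assume x: "x \<in> (\<Inter>n. \<Union>k. C n k)"
      obtain N where N: "\<And>n. n \<ge> N \<Longrightarrow> x \<in> (\<Union>k. C n k) \<longrightarrow> (\<exists>k\<le>g n. x \<in> C n k)"
        using g[of x] unfolding eventually_sequentially by blast
      have "\<forall>n. \<exists>k. x \<in> C n k"
        using x by blast
      then obtain k where k: "\<And>n. x \<in> C n (k n)"
        by metis
      define m where "m = (\<Sum>n<N. k n)"
      have "x \<in> (\<Union>k\<in>{..if n < N then m else g n}. C n k)" for n
      proof (cases "n < N")
        case True
        then have "k n \<le> m"
          unfolding m_def by (intro member_le_sum) auto
        then show ?thesis using True k[of n] by auto
      next
        case False
        then show ?thesis using N[of n] k[of n] by auto
      qed
      then show "x \<in> (\<Union>N m. F N m)"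
        unfolding F_def by blast
    qed
    show "(\<Union>N m. F N m) \<subseteq> (\<Inter>n. \<Union>k. C n k)"
      unfolding F_def by blast
  qed
  moreover have "(countable union_of closed) (\<Union>N m. F N m)"
    by (intro countable_union_of_UN) (auto intro: countable_union_of_inc closed_F)
  ultimately show ?thesis
    unfolding fsigma_iff_countable_union_of by simp
qed

text \<open>Every G_delta set is F_sigma: each of the open sets is a union of clopen sets, and the
  resulting clopen family is witness bounded by property (2).\<close>
lemma gdelta_is_fsigma:
  fixes S :: "'a::topological_space set"
  assumes clopen_basis: "open_countable_clopen_union TYPE('a)"
    and bounded: "continuous_images_bounded TYPE('a)"
    and "gdelta S"
  shows "fsigma S"
proof -
  obtain U :: "nat \<Rightarrow> 'a set" where U: "\<And>n. open (U n)" and S: "S = (\<Inter>n. U n)"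
    using \<open>gdelta S\<close> by (metis gdelta.cases)
  have "\<forall>n. \<exists>C::nat \<Rightarrow> 'a set. (\<forall>k. open (C k) \<and> closed (C k)) \<and> U n = (\<Union>k. C k)"
    by (metis open_clopen_sequence[OF clopen_basis U])
  then obtain C :: "nat \<Rightarrow> nat \<Rightarrow> 'a set"
    where clopen: "\<And>n k. open (C n k) \<and> closed (C n k)" and U_eq: "\<And>n. U n = (\<Union>k. C n k)"
    by metis
  have "witness_bounded C"
    using clopen by (rule clopen_family_witness_bounded[OF bounded])
  then have "fsigma (\<Inter>n. \<Union>k. C n k)"
    using clopen by (intro witness_bounded_Inter_Union_fsigma) auto
  then show ?thesis
    unfolding S U_eq .
qed

text \<open>Every Borel set is F_sigma: open sets are countable unions of clopen sets, F_sigma sets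
  are closed under countable unions, and under complements by the previous lemma.\<close>
lemma borel_is_fsigma:
  fixes S :: "'a::topological_space set"
  assumes clopen_basis: "open_countable_clopen_union TYPE('a)"
    and bounded: "continuous_images_bounded TYPE('a)"
    and "S \<in> sets borel"
  shows "fsigma S"
proof -
  have "S \<in> sigma_sets UNIV (Collect open)"
    using \<open>S \<in> sets borel\<close> by (simp add: sets_borel)
  then show ?thesis
  proof (induction rule: sigma_sets.induct)
    case (Basic U)
    then obtain C :: "nat \<Rightarrow> 'a set" where "\<And>k. open (C k) \<and> closed (C k)" and "U = (\<Union>k. C k)"
      using open_clopen_sequence[OF clopen_basis] by blast
    then show ?case by (metis fsigma.intros)
  next
    case Empty
    show ?case by (simp add: fsigma_iff_countable_union_of)
  next
    case (Compl S)
    from Compl.IH have "gdelta (- S)" by (rule fsigma_imp_gdelta)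
    then show ?case
      by (simp add: Compl_eq_Diff_UNIV gdelta_is_fsigma[OF clopen_basis bounded])
  next
    case (Union A)
    then show ?case
      unfolding fsigma_iff_countable_union_of by (intro countable_union_of_UN) auto
  qed
qed

subsection \<open>Closed families\<close>

lemma witness_bounded_subfamily:
  assumes "witness_bounded D"
    and sub: "\<And>n r. G n r \<subseteq> D n r"
    and eventually_in: "\<And>x. \<forall>\<^sub>F n in sequentially. \<forall>r. x \<in> D n r \<longrightarrow> x \<in> G n r"
  shows "witness_bounded G"
proof -
  obtain g where g: "\<And>x. \<forall>\<^sub>F n in sequentially. x \<in> (\<Union>r. D n r) \<longrightarrow> (\<exists>r\<le>g n. x \<in> D n r)"
    using \<open>witness_bounded D\<close> unfolding witness_bounded_def by blast
  have "\<forall>\<^sub>F n in sequentially. x \<in> (\<Union>r. G n r) \<longrightarrow> (\<exists>r\<le>g n. x \<in> G n r)" for x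
    using eventually_conj[OF g[of x] eventually_in[of x]]
    by (rule eventually_mono) (use sub in blast)
  then show ?thesis
    unfolding witness_bounded_def by blast
qed

text \<open>Write -G n r as a union of
  clopen sets E n r l and let h bound their witnesses, indexing the pairs (n, r) by
  prod_encode.  The clopen set D n r of points with no witness l \<le> h(n,r) contains G n r, and
  a point of D n r outside G n r would have a witness l for E n r, which is \<le> h(n,r) as soon
  as n is large, since prod_encode (n, r) \<ge> n.\<close>
lemma closed_family_witness_bounded:
  fixes G :: "nat \<Rightarrow> nat \<Rightarrow> 'a::topological_space set"
  assumes clopen_basis: "open_countable_clopen_union TYPE('a)"
    and bounded: "continuous_images_bounded TYPE('a)"
    and closed: "\<And>n r. closed (G n r)"
  shows "witness_bounded G"
proof -
  have "\<forall>n r. \<exists>E::nat \<Rightarrow> 'a set. (\<forall>l. open (E l) \<and> closed (E l)) \<and> - G n r = (\<Union>l. E l)"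
    by (metis open_clopen_sequence[OF clopen_basis] open_Compl closed)
  then obtain E :: "nat \<Rightarrow> nat \<Rightarrow> nat \<Rightarrow> 'a set"
    where E_clopen: "\<And>n r l. open (E n r l) \<and> closed (E n r l)"
      and E_eq: "\<And>n r. - G n r = (\<Union>l. E n r l)"
    by metis
  have "witness_bounded (\<lambda>q. case_prod E (prod_decode q))"
    using E_clopen by (intro clopen_family_witness_bounded[OF bounded]) (simp split: prod.split)
  then obtain h where h: "\<And>x. \<forall>\<^sub>F q in sequentially.
      x \<in> (\<Union>l. case_prod E (prod_decode q) l) \<longrightarrow> (\<exists>l\<le>h q. x \<in> case_prod E (prod_decode q) l)"
    unfolding witness_bounded_def by blast
  define D where "D n r = (\<Inter>l\<in>{..h (prod_encode (n, r))}. - E n r l)" for n r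
  have "open (D n r) \<and> closed (D n r)" for n r
    unfolding D_def using E_clopen by (auto intro!: open_INT closed_INT open_Compl closed_Compl)
  then have "witness_bounded D"
    by (rule clopen_family_witness_bounded[OF bounded])
  moreover have "G n r \<subseteq> D n r" for n r
    unfolding D_def using E_eq[of n r] by blast
  moreover have "\<forall>\<^sub>F n in sequentially. \<forall>r. x \<in> D n r \<longrightarrow> x \<in> G n r" for x
  proof -
    obtain Q where Q: "\<And>q. q \<ge> Q \<Longrightarrow>
        x \<in> (\<Union>l. case_prod E (prod_decode q) l) \<longrightarrow> (\<exists>l\<le>h q. x \<in> case_prod E (prod_decode q) l)"
      using h[of x] unfolding eventually_sequentially by blast
    have "x \<in> G n r" if "n \<ge> Q" and "x \<in> D n r" for n r
    proof (rule ccontr)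
      assume "x \<notin> G n r"
      then have "x \<in> (\<Union>l. E n r l)"
        using E_eq[of n r] by blast
      moreover have "prod_encode (n, r) \<ge> Q"
        using \<open>n \<ge> Q\<close> le_prod_encode_1[of n r] by linarith
      ultimately obtain l where "l \<le> h (prod_encode (n, r))" and "x \<in> E n r l"
        using Q[of "prod_encode (n, r)"] by auto
      then show False
        using \<open>x \<in> D n r\<close> unfolding D_def by blast
    qed
    then show ?thesis
      unfolding eventually_sequentially by blast
  qed
  ultimately show ?thesis
    by (rule witness_bounded_subfamily)
qed

subsection \<open>The two implications\<close>

text \<open>(1) implies (2): replacing the value \<infinity> by an arbitrary natural number turns a
  continuous map into (N \<union> {\<infinity>})^N into a Borel map into N^N with the same finite values.\<close>
lemma continuous_images_bounded_if_borel_images_bounded: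
  assumes borel_bounded:
    "\<forall>\<Psi> :: 'a \<Rightarrow> (nat \<Rightarrow> nat). \<Psi> \<in> borel_measurable borel \<longrightarrow> baire_bounded (range \<Psi>)"
  shows "continuous_images_bounded TYPE('a::topological_space)"
  unfolding continuous_images_bounded_def
proof (intro allI impI)
  fix \<Psi> :: "'a \<Rightarrow> nat \<Rightarrow> enat"
  assume "continuous_on UNIV \<Psi>"
  define \<Phi> where "\<Phi> x n = the_enat (\<Psi> x n)" for x n
  have "the_enat \<in> borel_measurable borel"
    \<comment> \<open>enat is countable and Hausdorff, so every subset is Borel\<close>
    using borel_measurable_count_space measurable_cong_sets sets_borel_eq_count_space by blast
  moreover have "(\<lambda>x. \<Psi> x n) \<in> borel_measurable borel" for n
    by (rule borel_measurable_continuous_onI)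
      (rule continuous_on_product_then_coordinatewise[OF \<open>continuous_on UNIV \<Psi>\<close>])
  ultimately have "(\<lambda>x. \<Phi> x n) \<in> borel_measurable borel" for n
    unfolding \<Phi>_def by (rule measurable_compose[rotated])
  then have "\<Phi> \<in> borel_measurable borel"
    by (rule measurable_coordinatewise_then_product)
  then obtain g where g: "\<And>x. \<forall>\<^sub>F n in sequentially. \<Phi> x n \<le> g n"
    using borel_bounded unfolding baire_bounded_def by blast
  show "enat_seq_bounded (range \<Psi>)"
    unfolding enat_seq_bounded_def
  proof (intro exI[of _ g] ballI)
    fix f assume "f \<in> range \<Psi>"
    then obtain x where f: "f = \<Psi> x" by blast
    show "\<forall>\<^sub>F n in sequentially. f n < \<infinity> \<longrightarrow> f n \<le> enat (g n)"
      using g[of x] by (rule eventually_mono) (auto simp: f \<Phi>_def)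
  qed
qed

lemma baire_bounded_if_witness_bounded_cover:
  fixes \<Psi> :: "'a \<Rightarrow> nat \<Rightarrow> nat"
  assumes "witness_bounded G"
    and cover: "\<And>x n. x \<in> (\<Union>r. G n r)"
    and dominated: "\<And>x n r. x \<in> G n r \<Longrightarrow> \<Psi> x n \<le> r"
  shows "baire_bounded (range \<Psi>)"
proof -
  obtain g where g: "\<And>x. \<forall>\<^sub>F n in sequentially. x \<in> (\<Union>r. G n r) \<longrightarrow> (\<exists>r\<le>g n. x \<in> G n r)"
    using \<open>witness_bounded G\<close> unfolding witness_bounded_def by blast
  have "\<forall>\<^sub>F n in sequentially. \<Psi> x n \<le> g n" for x
    using g[of x] by (rule eventually_mono) (use cover dominated le_trans in blast)
  then show ?thesis
    unfolding baire_bounded_def by blast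
qed

lemma borel_level_set_fsigma:
  fixes \<Psi> :: "'a::topological_space \<Rightarrow> nat \<Rightarrow> nat"
  assumes clopen_basis: "open_countable_clopen_union TYPE('a)"
    and bounded: "continuous_images_bounded TYPE('a)"
    and \<Psi>: "\<Psi> \<in> borel_measurable borel"
  shows "fsigma {x. \<Psi> x n = j}"
proof -
  have "(\<lambda>x. \<Psi> x n) \<in> borel_measurable borel"
    using \<Psi> by (rule measurable_product_then_coordinatewise)
  then have "(\<lambda>x. \<Psi> x n) -` {j} \<inter> space borel \<in> sets borel"
    by (rule measurable_sets) (simp add: sets_borel_eq_count_space)
  then show ?thesis
    by (intro borel_is_fsigma[OF clopen_basis bounded]) (simp add: vimage_def)
qed

text \<open>(2) implies (1): write each level set {x. \<Psi> x n = j} as a union of closed sets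
  F n j i and enumerate the pieces at stage n by r = prod_encode (j, i) \<ge> j.  This closed
  family covers the space at every stage and is witness bounded, which bounds \<Psi>.\<close>
lemma borel_images_bounded_if_continuous_images_bounded:
  assumes clopen_basis: "open_countable_clopen_union TYPE('a::topological_space)"
    and bounded: "continuous_images_bounded TYPE('a)"
  shows "\<forall>\<Psi> :: 'a \<Rightarrow> (nat \<Rightarrow> nat). \<Psi> \<in> borel_measurable borel \<longrightarrow> baire_bounded (range \<Psi>)"
proof (intro allI impI)
  fix \<Psi> :: "'a \<Rightarrow> nat \<Rightarrow> nat"
  assume "\<Psi> \<in> borel_measurable borel"
  then have "\<forall>n j. \<exists>F::nat \<Rightarrow> 'a set. (\<forall>i. closed (F i)) \<and> {x. \<Psi> x n = j} = (\<Union>i. F i)"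
    by (metis fsigma.cases borel_level_set_fsigma[OF clopen_basis bounded])
  then obtain F :: "nat \<Rightarrow> nat \<Rightarrow> nat \<Rightarrow> 'a set"
    where F_closed: "\<And>n j i. closed (F n j i)" and F_eq: "\<And>n j. {x. \<Psi> x n = j} = (\<Union>i. F n j i)"
    by metis
  define G where "G n r = case_prod (F n) (prod_decode r)" for n r
  have "closed (G n r)" for n r
    using F_closed by (simp add: G_def split: prod.split)
  then have "witness_bounded G"
    by (rule closed_family_witness_bounded[OF clopen_basis bounded])
  moreover have "x \<in> (\<Union>r. G n r)" for x n
  proof -
    obtain i where "x \<in> F n (\<Psi> x n) i"
      using F_eq[of n "\<Psi> x n"] by blast
    then have "x \<in> G n (prod_encode (\<Psi> x n, i))"
      by (simp add: G_def)
    then show ?thesis by blast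
  qed
  moreover have "\<Psi> x n \<le> r" if "x \<in> G n r" for x n r
  proof -
    have "x \<in> {y. \<Psi> y n = fst (prod_decode r)}"
      using that by (auto simp: F_eq G_def split: prod.splits)
    then have "\<Psi> x n = fst (prod_decode r)"
      by simp
    also have "\<dots> \<le> r"
      by (metis le_prod_encode_1 prod.collapse prod_decode_inverse)
    finally show ?thesis .
  qed
  ultimately show "baire_bounded (range \<Psi>)"
    by (rule baire_bounded_if_witness_bounded_cover)
qed

theorem mainTheorem17:
  assumes "open_countable_clopen_union TYPE('a::topological_space)"
  shows "(\<forall>\<Psi> :: 'a \<Rightarrow> (nat \<Rightarrow> nat). \<Psi> \<in> borel_measurable borel \<longrightarrow> baire_bounded (range \<Psi>))
     \<longleftrightarrow> (\<forall>\<Psi> :: 'a \<Rightarrow> (nat \<Rightarrow> enat). continuous_on UNIV \<Psi> \<longrightarrow> enat_seq_bounded (range \<Psi>))"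
  using continuous_images_bounded_if_borel_images_bounded
    borel_images_bounded_if_continuous_images_bounded[OF assms]
  unfolding continuous_images_bounded_def by blast

end
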